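(* There is a rule assigning to every bi-Lipschitz homeomorphism $\varphi$ of a closed unit square $S=[a,a+1]\times[b,b+1]\subset\mathbb{R}^2$ onto itself fixing the four vertices of $S$ a bi-Lipschitz homeomorphism $\overline{\varphi}\colon S\times[0,1]\to S\times[0,1]$ such that $\overline{\varphi}=\mathrm{id}$ on $S\times\{0\}$ and $\overline{\varphi}(x,1)=(\varphi(x),1)$ for $x\in S$, and which is compatible in the following sense: if $\varphi\colon[0,1]^2\to[0,1]^2$ and $\varphi'\colon[1,2]\times[0,1]\to[1,2]\times[0,1]$ are two such maps with $\varphi=\varphi'$ on the common edge $\{1\}\times[0,1]$, then $\overline{\varphi}=\overline{\varphi}'$ on $\{1\}\times[0,1]\times[0,1]$. *)

theory Defs
  imports "HOL-Analysis.Analysis"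
begin

definition usq :: "real \<Rightarrow> real \<Rightarrow> (real \<times> real) set" where
  "usq a b = {a..a+1} \<times> {b..b+1}"

definition bilipschitz_homeo :: "'a::metric_space set \<Rightarrow> 'b::metric_space set \<Rightarrow> ('a \<Rightarrow> 'b) \<Rightarrow> bool" where
  "bilipschitz_homeo S T f \<longleftrightarrow>
     (\<exists>g. homeomorphism S T f g \<and> (\<exists>C. C-lipschitz_on S f) \<and> (\<exists>C. C-lipschitz_on T g))"

definition sq_admissible :: "real \<Rightarrow> real \<Rightarrow> (real \<times> real \<Rightarrow> real \<times> real) \<Rightarrow> bool" where
  "sq_admissible a b \<phi> \<longleftrightarrow> bilipschitz_homeo (usq a b) (usq a b) \<phi> \<and>
     \<phi> (a, b) = (a, b) \<and> \<phi> (a+1, b) = (a+1, b) \<and>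
     \<phi> (a, b+1) = (a, b+1) \<and> \<phi> (a+1, b+1) = (a+1, b+1)"

end

theory Submission
  imports Defs
begin

text \<open>A homeomorphism of the square fixing its vertices maps each edge onto itself: it preserves
  the boundary by invariance of domain, and an arc in the boundary joining two adjacent vertices
  cannot pass through a third one. On each edge it is therefore an increasing bi-Lipschitz map h
  of an interval. On the boundary of the cube S \<times> [0,1] take the identity on the bottom, \<phi> on
  the top, and on each side face the straight-line isotopy (s,t) \<mapsto> ((1-t) s + t h(s), t).
  This maps every face bi-Lipschitz onto itself and is injective, so coning it off from the
  centre of the cube (radially for the gauge whose unit sphere is the boundary of the cube)
  gives a bi-Lipschitz homeomorphism. On a side face everything depends only on \<phi> along the
  corresponding edge, which makes the extensions of adjacent squares agree.\<close>

section \<open>Homeomorphisms of the square preserve its edges\<close>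

definition square_boundary :: "real \<Rightarrow> real \<Rightarrow> (real \<times> real) set" where
  "square_boundary a b = {p \<in> usq a b. fst p = a \<or> fst p = a+1 \<or> snd p = b \<or> snd p = b+1}"

lemma square_boundary_eq: "square_boundary a b = usq a b - interior (usq a b)"
  by (auto simp: square_boundary_def usq_def interior_Times)

lemma homeomorphism_maps_boundary:
  fixes f g :: "'a::euclidean_space \<Rightarrow> 'a"
  assumes hom: "homeomorphism S T f g" and x: "x \<in> S - interior S"
  shows "f x \<in> T - interior T"
proof -
  have g: "continuous_on T g" "g ` T = S" "f x \<in> T" "g (f x) = x"
    using hom x by (auto simp: homeomorphism_def)
  have "inj_on g T"
    using hom by (metis homeomorphism_apply2 inj_on_inverseI)
  then have "g \<in> interior T \<rightarrow> interior S"
    using continuous_image_subset_interior[OF g(1)] g(2) by simp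
  then have "f x \<notin> interior T"
    using g(4) x by (metis Diff_iff Pi_iff)
  then show ?thesis using g(3) by simp
qed

text \<open>Arc length along the boundary, starting at the vertex (a,b) and running counterclockwise;
  it is continuous and injective once that vertex is removed.\<close>
definition perimeter_coord :: "real \<Rightarrow> real \<Rightarrow> real \<times> real \<Rightarrow> real" where
  "perimeter_coord a b p =
     (if (snd p - b) - (fst p - a) \<le> 0 then (fst p - a) + (snd p - b)
      else 4 - (fst p - a) - (snd p - b))"

lemma continuous_on_perimeter_coord:
  "continuous_on (square_boundary a b - {(a,b)}) (perimeter_coord a b)"
  unfolding perimeter_coord_def
proof (rule continuous_on_cases_le)
  fix p assume "p \<in> square_boundary a b - {(a, b)}" "snd p - b - (fst p - a) = 0"
  then show "fst p - a + (snd p - b) = 4 - (fst p - a) - (snd p - b)"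
    by (cases p) (auto simp: square_boundary_def usq_def)
qed (auto intro!: continuous_intros)

lemma inj_on_perimeter_coord: "inj_on (perimeter_coord a b) (square_boundary a b - {(a,b)})"
proof (rule inj_onI)
  fix p q
  assume "p \<in> square_boundary a b - {(a,b)}" "q \<in> square_boundary a b - {(a,b)}"
    "perimeter_coord a b p = perimeter_coord a b q"
  then show "p = q"
    by (cases p, cases q) (auto simp: square_boundary_def usq_def perimeter_coord_def split: if_splits)
qed

lemma perimeter_coord_right_edge:
  "p \<in> square_boundary a b - {(a,b)} \<Longrightarrow> 1 < perimeter_coord a b p \<Longrightarrow> perimeter_coord a b p < 2
   \<Longrightarrow> fst p = a+1"
  by (cases p) (auto simp: square_boundary_def usq_def perimeter_coord_def split: if_splits)

lemma continuous_inj_between_endpoints: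
  fixes u :: "'a::topological_space \<Rightarrow> real" and \<gamma> :: "real \<Rightarrow> 'a"
  assumes "continuous_on D u" "inj_on u D" "continuous_on {s..t} \<gamma>" "inj_on \<gamma> {s..t}"
    "\<gamma> ` {s..t} \<subseteq> D" "s < x" "x < t"
  shows "min (u (\<gamma> s)) (u (\<gamma> t)) < u (\<gamma> x) \<and> u (\<gamma> x) < max (u (\<gamma> s)) (u (\<gamma> t))"
proof -
  have "continuous_on {s..t} (u \<circ> \<gamma>)"
    using assms by (metis continuous_on_compose continuous_on_subset)
  moreover have "inj_on (u \<circ> \<gamma>) {s..t}"
    using assms by (meson comp_inj_on inj_on_subset)
  ultimately show ?thesis using continuous_inj_imp_mono[of s x t "u \<circ> \<gamma>"] assms by auto
qed

locale square_homeo =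
  fixes a b :: real and \<phi> \<psi> :: "real \<times> real \<Rightarrow> real \<times> real"
  assumes homeo: "homeomorphism (usq a b) (usq a b) \<phi> \<psi>"
    and fixes_vertices: "\<phi> (a,b) = (a,b)" "\<phi> (a+1,b) = (a+1,b)" "\<phi> (a,b+1) = (a,b+1)"
      "\<phi> (a+1,b+1) = (a+1,b+1)"
begin

lemma maps_square: "p \<in> usq a b \<Longrightarrow> \<phi> p \<in> usq a b"
  using homeo by (metis homeomorphism_image1 imageI)

lemma inverse_apply: "p \<in> usq a b \<Longrightarrow> \<psi> (\<phi> p) = p"
  using homeo by (simp add: homeomorphism_apply1)

lemma inj_on_square: "inj_on \<phi> (usq a b)"
  using inverse_apply by (metis inj_on_inverseI)

lemma maps_boundary: "p \<in> square_boundary a b \<Longrightarrow> \<phi> p \<in> square_boundary a b"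
  using homeomorphism_maps_boundary[OF homeo] by (simp add: square_boundary_eq)

lemma continuous_on_square: "continuous_on (usq a b) \<phi>"
  using homeo by (simp add: homeomorphism_def)

lemma right_edge:
  assumes y: "y \<in> {b..b+1}"
  shows "fst (\<phi> (a+1, y)) = a+1"
proof (cases "y = b \<or> y = b+1")
  case True
  then show ?thesis using fixes_vertices by auto
next
  case False
  define \<gamma> where "\<gamma> = (\<lambda>y. \<phi> (a+1,y))"
  have edge: "(\<lambda>y. (a+1,y)) ` {b..b+1} \<subseteq> usq a b" by (auto simp: usq_def)
  have "continuous_on {b..b+1} \<gamma>" unfolding \<gamma>_def
    by (rule continuous_on_compose2[OF continuous_on_square _ edge]) (auto intro!: continuous_intros)
  moreover have "inj_on \<gamma> {b..b+1}"
    unfolding \<gamma>_def using inj_on_square edge by (auto simp: inj_on_def image_subset_iff)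
  moreover have D: "\<gamma> ` {b..b+1} \<subseteq> square_boundary a b - {(a,b)}"
  proof
    fix q assume "q \<in> \<gamma> ` {b..b+1}"
    then obtain z where z: "z \<in> {b..b+1}" "q = \<phi> (a+1,z)" by (auto simp: \<gamma>_def)
    have "(a+1,z) \<in> square_boundary a b" using z by (simp add: square_boundary_def usq_def)
    then have "q \<in> square_boundary a b" using maps_boundary z(2) by blast
    moreover have "(a+1,z) \<noteq> (a,b)" "(a,b) \<in> usq a b" "(a+1,z) \<in> usq a b"
      using z by (auto simp: usq_def)
    then have "q \<noteq> (a,b)" using z(2) fixes_vertices(1) inj_on_square by (metis inj_onD)
    ultimately show "q \<in> square_boundary a b - {(a,b)}" by simp
  qed
  moreover have "b < y" "y < b+1" using y False by auto
  ultimately have "min (perimeter_coord a b (\<gamma> b)) (perimeter_coord a b (\<gamma> (b+1))) < perimeter_coord a b (\<gamma> y)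
      \<and> perimeter_coord a b (\<gamma> y) < max (perimeter_coord a b (\<gamma> b)) (perimeter_coord a b (\<gamma> (b+1)))"
    by (rule continuous_inj_between_endpoints[OF continuous_on_perimeter_coord inj_on_perimeter_coord])
  moreover have "perimeter_coord a b (\<gamma> b) = 1" "perimeter_coord a b (\<gamma> (b+1)) = 2"
    using fixes_vertices by (simp_all add: \<gamma>_def perimeter_coord_def)
  moreover have "\<gamma> y \<in> square_boundary a b - {(a,b)}" using D y by blast
  ultimately show ?thesis using perimeter_coord_right_edge by (simp add: \<gamma>_def)
qed

lemma square_homeo_inverse: "square_homeo a b \<psi> \<phi>"
proof -
  have "(a,b) \<in> usq a b" "(a+1,b) \<in> usq a b" "(a,b+1) \<in> usq a b" "(a+1,b+1) \<in> usq a b"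
    by (auto simp: usq_def)
  then show ?thesis
    using homeomorphism_symD[OF homeo] inverse_apply fixes_vertices by unfold_locales metis+
qed

end

definition square_rotation :: "real \<Rightarrow> real \<Rightarrow> real \<times> real \<Rightarrow> real \<times> real" where
  "square_rotation a b p = (2*a+1 - fst p, 2*b+1 - snd p)"

lemma homeomorphism_square_rotation:
  "homeomorphism (usq a b) (usq a b) (square_rotation a b) (square_rotation a b)"
  by (rule homeomorphismI) (auto simp: square_rotation_def usq_def intro!: continuous_intros)

lemma homeomorphism_swap: "homeomorphism (usq a b) (usq b a) prod.swap prod.swap"
  by (rule homeomorphismI) (auto simp: usq_def intro!: continuous_intros)

context square_homeo
begin

lemma square_homeo_rotate:
  "square_homeo a b (square_rotation a b \<circ> \<phi> \<circ> square_rotation a b)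
     (square_rotation a b \<circ> \<psi> \<circ> square_rotation a b)"
proof
  show "homeomorphism (usq a b) (usq a b) (square_rotation a b \<circ> \<phi> \<circ> square_rotation a b)
     (square_rotation a b \<circ> \<psi> \<circ> square_rotation a b)"
    using homeomorphism_compose[OF homeomorphism_compose[OF homeomorphism_square_rotation homeo]
        homeomorphism_square_rotation]
    by (simp add: o_assoc)
qed (auto simp: square_rotation_def fixes_vertices)

lemma square_homeo_swap:
  "square_homeo b a (prod.swap \<circ> \<phi> \<circ> prod.swap) (prod.swap \<circ> \<psi> \<circ> prod.swap)"
proof
  show "homeomorphism (usq b a) (usq b a) (prod.swap \<circ> \<phi> \<circ> prod.swap) (prod.swap \<circ> \<psi> \<circ> prod.swap)"
    using homeomorphism_compose[OF homeomorphism_compose[OF homeomorphism_swap homeo] homeomorphism_swap]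
    by (simp add: o_assoc)
qed (auto simp: fixes_vertices)

lemma left_edge: "y \<in> {b..b+1} \<Longrightarrow> fst (\<phi> (a, y)) = a"
  using square_homeo.right_edge[OF square_homeo_rotate, of "2*b+1-y"]
  by (simp add: square_rotation_def)

lemma top_edge: "x \<in> {a..a+1} \<Longrightarrow> snd (\<phi> (x, b+1)) = b+1"
  using square_homeo.right_edge[OF square_homeo_swap, of x] by simp

lemma bottom_edge: "x \<in> {a..a+1} \<Longrightarrow> snd (\<phi> (x, b)) = b"
  using square_homeo.top_edge[OF square_homeo_rotate, of "2*a+1-x"]
  by (simp add: square_rotation_def)

lemma edges_reflected:
  assumes x: "x \<in> usq a b"
  shows "fst (\<phi> x) = a \<Longrightarrow> fst x = a" "fst (\<phi> x) = a+1 \<Longrightarrow> fst x = a+1"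
    "snd (\<phi> x) = b \<Longrightarrow> snd x = b" "snd (\<phi> x) = b+1 \<Longrightarrow> snd x = b+1"
proof -
  obtain u v where uv: "\<phi> x = (u,v)" by (metis prod.collapse)
  have "u \<in> {a..a+1}" "v \<in> {b..b+1}" using maps_square[OF x] uv by (auto simp: usq_def)
  moreover have "x = \<psi> (u,v)" using inverse_apply[OF x] uv by simp
  ultimately show "fst (\<phi> x) = a \<Longrightarrow> fst x = a" "fst (\<phi> x) = a+1 \<Longrightarrow> fst x = a+1"
    "snd (\<phi> x) = b \<Longrightarrow> snd x = b" "snd (\<phi> x) = b+1 \<Longrightarrow> snd x = b+1"
    using square_homeo.left_edge[OF square_homeo_inverse] square_homeo.right_edge[OF square_homeo_inverse]
      square_homeo.bottom_edge[OF square_homeo_inverse] square_homeo.top_edge[OF square_homeo_inverse]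
      uv by auto
qed

end

section \<open>Bi-Lipschitz bijections and monotone edge maps\<close>

definition bilipschitz_onto :: "real \<Rightarrow> 'a::metric_space set \<Rightarrow> ('a \<Rightarrow> 'a) \<Rightarrow> bool" where
  "bilipschitz_onto K S f \<longleftrightarrow>
     f ` S = S \<and> K-lipschitz_on S f \<and> (\<forall>p\<in>S. \<forall>q\<in>S. dist p q \<le> K * dist (f p) (f q))"

lemma bilipschitz_ontoI:
  assumes "f ` S = S" "0 \<le> K"
    and "\<And>p q. p \<in> S \<Longrightarrow> q \<in> S \<Longrightarrow> dist (f p) (f q) \<le> K * dist p q"
    and "\<And>p q. p \<in> S \<Longrightarrow> q \<in> S \<Longrightarrow> dist p q \<le> K * dist (f p) (f q)"
  shows "bilipschitz_onto K S f"
  using assms by (auto simp: bilipschitz_onto_def intro: lipschitz_onI)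

lemma bilipschitz_ontoD:
  assumes "bilipschitz_onto K S f" "p \<in> S" "q \<in> S"
  shows "f p \<in> S" "dist (f p) (f q) \<le> K * dist p q" "dist p q \<le> K * dist (f p) (f q)"
  using assms by (auto simp: bilipschitz_onto_def dest: lipschitz_onD)

lemma bilipschitz_onto_mono:
  assumes f: "bilipschitz_onto K S f" and K: "K \<le> K'"
  shows "bilipschitz_onto K' S f"
proof (rule bilipschitz_ontoI)
  show "f ` S = S" using f by (simp add: bilipschitz_onto_def)
  show "0 \<le> K'" using f K lipschitz_on_nonneg by (force simp: bilipschitz_onto_def)
next
  fix p q assume "p \<in> S" "q \<in> S"
  then show "dist (f p) (f q) \<le> K' * dist p q" "dist p q \<le> K' * dist (f p) (f q)"
    using bilipschitz_ontoD[OF f] mult_right_mono[OF K] zero_le_dist by (meson order_trans)+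
qed

lemma bilipschitz_onto_isometric_conj:
  fixes E :: "'a::metric_space \<Rightarrow> 'b::metric_space"
  assumes g: "bilipschitz_onto K R g" and E: "\<And>u v. dist (E u) (E v) = dist u v"
    and B: "\<And>x. x \<in> R \<Longrightarrow> B (E x) = E (g x)"
  shows "bilipschitz_onto K (E ` R) B"
proof (rule bilipschitz_ontoI)
  have "g ` R = R" using g by (simp add: bilipschitz_onto_def)
  then show "B ` E ` R = E ` R"
    using B by (simp add: image_image) (metis image_cong image_image)
  show "0 \<le> K" using g lipschitz_on_nonneg by (auto simp: bilipschitz_onto_def)
next
  fix p q assume "p \<in> E ` R" "q \<in> E ` R"
  then obtain u v where "u \<in> R" "v \<in> R" "p = E u" "q = E v" by blast
  then show "dist (B p) (B q) \<le> K * dist p q" "dist p q \<le> K * dist (B p) (B q)"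
    using bilipschitz_ontoD[OF g] by (simp_all add: B E)
qed

lemma bilipschitz_onto_inv_into:
  assumes f: "bilipschitz_onto K S f" and ST: "S \<subseteq> T" and inj: "inj_on f T"
  shows "bilipschitz_onto K S (inv_into T f)"
proof (rule bilipschitz_ontoI)
  have fS: "f ` S = S" using f by (simp add: bilipschitz_onto_def)
  then show "inv_into T f ` S = S" using inv_into_image_cancel[OF inj ST] by simp
  show "0 \<le> K" using f lipschitz_on_nonneg by (auto simp: bilipschitz_onto_def)
  fix p q assume p: "p \<in> S" and q: "q \<in> S"
  obtain p' q' where pq: "p' \<in> S" "q' \<in> S" "p = f p'" "q = f q'"
    using imageE[of p f S] imageE[of q f S] p q fS by metis
  moreover have "inv_into T f (f p') = p'" "inv_into T f (f q') = q'"
    using pq ST inj by (meson inv_into_f_f subsetD)+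
  ultimately show "dist (inv_into T f p) (inv_into T f q) \<le> K * dist p q"
    and "dist p q \<le> K * dist (inv_into T f p) (inv_into T f q)"
    using bilipschitz_ontoD(2,3)[OF f pq(1,2)] by simp_all
qed

lemma continuous_inj_increasing:
  fixes h :: "real \<Rightarrow> real"
  assumes cont: "continuous_on {l..u} h" and inj: "inj_on h {l..u}" and lu: "h l < h u"
    and s: "l \<le> s" "s \<le> s'" "s' \<le> u"
  shows "h s \<le> h s'"
proof -
  have above: "h l < h z" if "l < z" "z \<le> u" for z
  proof (cases "z = u")
    case False
    then show ?thesis using continuous_inj_imp_mono[OF _ _ cont inj, of z] that lu by auto
  qed (use lu in simp)
  show ?thesis
  proof (cases "s = s' \<or> s = l")
    case True
    then show ?thesis using above[of s'] s by (cases "s = s'") (auto intro: less_imp_le)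
  next
    case False
    then have "l < s" "s < s'" using s by auto
    moreover have "continuous_on {l..s'} h" "inj_on h {l..s'}"
      using cont inj s by (auto intro: continuous_on_subset inj_on_subset)
    ultimately show ?thesis
      using continuous_inj_imp_mono[of l s s' h] above[of s'] s by force
  qed
qed

definition edge_map :: "real \<Rightarrow> real \<Rightarrow> real \<Rightarrow> (real \<Rightarrow> real) \<Rightarrow> bool" where
  "edge_map \<alpha> \<delta> K h \<longleftrightarrow> 0 < \<delta> \<and> h \<alpha> = \<alpha> \<and> h (\<alpha>+1) = \<alpha>+1 \<and>
     (\<forall>s s'. \<alpha> \<le> s \<longrightarrow> s \<le> s' \<longrightarrow> s' \<le> \<alpha>+1 \<longrightarrow> \<delta>*(s'-s) \<le> h s' - h s \<and> h s' - h s \<le> K*(s'-s))"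

lemma edge_map_if_bilipschitz:
  fixes h :: "real \<Rightarrow> real"
  assumes h0: "h \<alpha> = \<alpha>" and h1: "h (\<alpha>+1) = \<alpha>+1"
    and up: "\<And>s s'. s \<in> {\<alpha>..\<alpha>+1} \<Longrightarrow> s' \<in> {\<alpha>..\<alpha>+1} \<Longrightarrow> \<bar>h s - h s'\<bar> \<le> C1 * \<bar>s - s'\<bar>"
    and low: "\<And>s s'. s \<in> {\<alpha>..\<alpha>+1} \<Longrightarrow> s' \<in> {\<alpha>..\<alpha>+1} \<Longrightarrow> \<bar>s - s'\<bar> \<le> C2 * \<bar>h s - h s'\<bar>"
  shows "edge_map \<alpha> (1/C2) C1 h"
proof -
  have C2: "0 < C2" using low[of \<alpha> "\<alpha>+1"] h0 h1 by simp
  have "C1-lipschitz_on {\<alpha>..\<alpha>+1} h"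
    using up up[of \<alpha> "\<alpha>+1"] h0 h1 by (intro lipschitz_onI) (auto simp: dist_real_def)
  then have cont: "continuous_on {\<alpha>..\<alpha>+1} h" by (rule lipschitz_on_continuous_on)
  have inj: "inj_on h {\<alpha>..\<alpha>+1}"
    using low by (intro inj_onI) (metis abs_eq_0 diff_self mult_zero_right abs_le_zero_iff eq_iff_diff_eq_0)
  have "1/C2*(s'-s) \<le> h s' - h s \<and> h s' - h s \<le> C1*(s'-s)"
    if "\<alpha> \<le> s" "s \<le> s'" "s' \<le> \<alpha>+1" for s s'
  proof -
    have I: "s \<in> {\<alpha>..\<alpha>+1}" "s' \<in> {\<alpha>..\<alpha>+1}" using that by auto
    have m: "h s \<le> h s'" using continuous_inj_increasing[OF cont inj _ that] h0 h1 by simp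
    have "s' - s \<le> C2 * (h s' - h s)" using low[OF I(2) I(1)] m that by simp
    then have "1/C2*(s'-s) \<le> h s' - h s" using C2 by (simp add: field_simps)
    moreover have "h s' - h s \<le> C1 * (s' - s)" using up[OF I(2) I(1)] m that by simp
    ultimately show ?thesis by simp
  qed
  then show ?thesis unfolding edge_map_def using C2 h0 h1 by auto
qed

definition edge_isotopy :: "(real \<Rightarrow> real) \<Rightarrow> real \<Rightarrow> real \<Rightarrow> real" where
  "edge_isotopy h s t = (1 - t) * s + t * h s"

lemma edge_isotopy_0 [simp]: "edge_isotopy h s 0 = s"
  and edge_isotopy_1 [simp]: "edge_isotopy h s 1 = h s"
  by (simp_all add: edge_isotopy_def)

lemma dist_Pair_real_bounds:
  fixes u v u' v' :: real
  shows "\<bar>u - u'\<bar> \<le> dist (u,v) (u',v')" "\<bar>v - v'\<bar> \<le> dist (u,v) (u',v')"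
    "dist (u,v) (u',v') \<le> \<bar>u - u'\<bar> + \<bar>v - v'\<bar>"
proof -
  have d: "dist (u,v) (u',v') = sqrt (\<bar>u - u'\<bar>\<^sup>2 + \<bar>v - v'\<bar>\<^sup>2)"
    by (simp add: dist_Pair_Pair dist_real_def)
  show "\<bar>u - u'\<bar> \<le> dist (u,v) (u',v')" unfolding d by (rule real_sqrt_sum_squares_ge1)
  show "\<bar>v - v'\<bar> \<le> dist (u,v) (u',v')" unfolding d by (rule real_sqrt_sum_squares_ge2)
  show "dist (u,v) (u',v') \<le> \<bar>u - u'\<bar> + \<bar>v - v'\<bar>" unfolding d
    using sqrt_sum_squares_le_sum_abs[of "\<bar>u - u'\<bar>" "\<bar>v - v'\<bar>"] by simp
qed

context
  fixes \<alpha> \<delta> K :: real and h :: "real \<Rightarrow> real"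
  assumes edge: "edge_map \<alpha> \<delta> K h"
begin

lemma edge_map_increments:
  "\<alpha> \<le> s \<Longrightarrow> s \<le> s' \<Longrightarrow> s' \<le> \<alpha>+1 \<Longrightarrow> \<delta>*(s'-s) \<le> h s' - h s \<and> h s' - h s \<le> K*(s'-s)"
  using edge by (auto simp: edge_map_def)

lemma edge_map_constants: "0 < \<delta>" "\<delta> \<le> 1" "1 \<le> K" "h \<alpha> = \<alpha>" "h (\<alpha>+1) = \<alpha>+1"
  using edge edge_map_increments[of \<alpha> "\<alpha>+1"] by (auto simp: edge_map_def)

lemma edge_map_maps_edge: assumes "s \<in> {\<alpha>..\<alpha>+1}" shows "h s \<in> {\<alpha>..\<alpha>+1}"
proof -
  have "\<delta>*(s-\<alpha>) \<le> h s - \<alpha>" "\<delta>*(\<alpha>+1-s) \<le> \<alpha>+1 - h s"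
    using edge_map_increments[of \<alpha> s] edge_map_increments[of s "\<alpha>+1"] edge_map_constants assms
    by auto
  moreover have "0 \<le> \<delta>*(s-\<alpha>)" "0 \<le> \<delta>*(\<alpha>+1-s)" using assms edge_map_constants by auto
  ultimately show ?thesis by auto
qed

lemma edge_map_dist:
  assumes "s \<in> {\<alpha>..\<alpha>+1}" "s' \<in> {\<alpha>..\<alpha>+1}"
  shows "\<delta>*\<bar>s-s'\<bar> \<le> \<bar>h s - h s'\<bar>" "\<bar>h s - h s'\<bar> \<le> K*\<bar>s-s'\<bar>"
proof -
  have "\<delta>*\<bar>s-s'\<bar> \<le> \<bar>h s - h s'\<bar> \<and> \<bar>h s - h s'\<bar> \<le> K*\<bar>s-s'\<bar>"
  proof (cases "s \<le> s'")
    case True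
    then have "\<delta>*(s'-s) \<le> h s' - h s" "h s' - h s \<le> K*(s'-s)" "0 \<le> \<delta>*(s'-s)"
      using edge_map_increments[of s s'] edge_map_constants assms by auto
    then show ?thesis using True by (simp add: abs_if)
  next
    case False
    then have "\<delta>*(s-s') \<le> h s - h s'" "h s - h s' \<le> K*(s-s')" "0 \<le> \<delta>*(s-s')"
      using edge_map_increments[of s' s] edge_map_constants assms by auto
    then show ?thesis using False by (simp add: abs_if)
  qed
  then show "\<delta>*\<bar>s-s'\<bar> \<le> \<bar>h s - h s'\<bar>" "\<bar>h s - h s'\<bar> \<le> K*\<bar>s-s'\<bar>" by auto
qed

lemma edge_isotopy_endpoints: "edge_isotopy h \<alpha> t = \<alpha>" "edge_isotopy h (\<alpha>+1) t = \<alpha>+1"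
  using edge_map_constants by (simp_all add: edge_isotopy_def algebra_simps)

lemma edge_isotopy_maps_edge:
  assumes "s \<in> {\<alpha>..\<alpha>+1}" "t \<in> {0..1}"
  shows "edge_isotopy h s t \<in> {\<alpha>..\<alpha>+1}"
proof -
  have hs: "h s \<in> {\<alpha>..\<alpha>+1}" using edge_map_maps_edge assms by auto
  have "(1 - t) * \<alpha> \<le> (1 - t) * s" "t * \<alpha> \<le> t * h s" "(1 - t) * s \<le> (1 - t) * (\<alpha> + 1)"
    "t * h s \<le> t * (\<alpha> + 1)"
    using hs assms by (intro mult_left_mono; simp)+
  then show ?thesis unfolding edge_isotopy_def by (auto simp: algebra_simps)
qed

lemma edge_isotopy_upper:
  assumes "s \<in> {\<alpha>..\<alpha>+1}" "s' \<in> {\<alpha>..\<alpha>+1}" "t \<in> {0..1}" "t' \<in> {0..1}"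
  shows "\<bar>edge_isotopy h s t - edge_isotopy h s' t'\<bar> \<le> (K+2)*\<bar>s-s'\<bar> + \<bar>t-t'\<bar>"
proof -
  have e: "edge_isotopy h s t - edge_isotopy h s' t'
      = (s - s') + t*((h s - h s') - (s - s')) + (t - t')*(h s' - s')"
    by (simp add: edge_isotopy_def algebra_simps)
  have "\<bar>t*((h s - h s') - (s - s'))\<bar> \<le> \<bar>(h s - h s') - (s - s')\<bar>"
    using assms by (simp add: abs_mult mult_left_le_one_le)
  also have "\<dots> \<le> \<bar>h s - h s'\<bar> + \<bar>s - s'\<bar>" by (rule abs_triangle_ineq4)
  also have "\<dots> \<le> (K+1)*\<bar>s-s'\<bar>" using edge_map_dist(2)[OF assms(1,2)] by (simp add: algebra_simps)
  finally have 1: "\<bar>t*((h s - h s') - (s - s'))\<bar> \<le> (K+1)*\<bar>s-s'\<bar>" .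
  have "\<bar>h s' - s'\<bar> \<le> 1" using edge_map_maps_edge[OF assms(2)] assms by auto
  then have 2: "\<bar>(t - t')*(h s' - s')\<bar> \<le> \<bar>t-t'\<bar>"
    by (simp add: abs_mult mult_right_le_one_le)
  show ?thesis unfolding e using 1 2 by (simp add: algebra_simps) (smt (verit) abs_triangle_ineq)
qed

lemma edge_isotopy_lower:
  assumes "s \<in> {\<alpha>..\<alpha>+1}" "s' \<in> {\<alpha>..\<alpha>+1}" "t \<in> {0..1}" "t' \<in> {0..1}"
  shows "\<delta>*\<bar>s-s'\<bar> - \<bar>t-t'\<bar> \<le> \<bar>edge_isotopy h s t - edge_isotopy h s' t'\<bar>"
proof -
  have e: "edge_isotopy h s t - edge_isotopy h s' t'
      = ((1-t)*(s - s') + t*(h s - h s')) + (t - t')*(h s' - s')"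
    by (simp add: edge_isotopy_def algebra_simps)
  \<comment> \<open>both s - s' and h s - h s' have the same sign, so the convex combination keeps the lower bound\<close>
  have b: "\<delta>*\<bar>s-s'\<bar> \<le> \<bar>(1-t)*(s - s') + t*(h s - h s')\<bar>"
  proof -
    obtain l r where lr: "{l, r} = {s, s'}" "l \<le> r" by (metis insert_commute linear)
    then have lr': "l \<in> {\<alpha>..\<alpha>+1}" "r \<in> {\<alpha>..\<alpha>+1}" "\<bar>s-s'\<bar> = r - l"
      "\<bar>(1-t)*(s - s') + t*(h s - h s')\<bar> = \<bar>(1-t)*(r - l) + t*(h r - h l)\<bar>"
      using assms by (auto simp: doubleton_eq_iff abs_minus_commute algebra_simps)
    have o: "\<delta>*(r-l) \<le> h r - h l" using edge_map_increments[of l r] lr lr' by auto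
    have "(1-t)*(\<delta>*(r-l)) \<le> (1-t)*(r-l)" using assms edge_map_constants lr
      by (intro mult_left_mono) (auto intro: mult_left_le_one_le)
    moreover have "t*(\<delta>*(r-l)) \<le> t*(h r - h l)" using o assms by (intro mult_left_mono) auto
    ultimately have "\<delta>*(r-l) \<le> (1-t)*(r - l) + t*(h r - h l)" by (simp add: algebra_simps)
    then show ?thesis unfolding lr' by linarith
  qed
  have "\<bar>h s' - s'\<bar> \<le> 1" using edge_map_maps_edge[OF assms(2)] assms by auto
  then have "\<bar>(t - t')*(h s' - s')\<bar> \<le> \<bar>t-t'\<bar>"
    by (simp add: abs_mult mult_right_le_one_le)
  then show ?thesis unfolding e using b by (smt (verit) abs_triangle_ineq)
qed

lemma edge_isotopy_reaches_endpoint: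
  assumes "s \<in> {\<alpha>..\<alpha>+1}" "t \<in> {0..1}"
  shows "edge_isotopy h s t = \<alpha> \<longleftrightarrow> s = \<alpha>" "edge_isotopy h s t = \<alpha>+1 \<longleftrightarrow> s = \<alpha>+1"
  using edge_isotopy_lower[of s \<alpha> t t] edge_isotopy_lower[of s "\<alpha>+1" t t] edge_isotopy_endpoints
    edge_map_constants assms
  by (auto simp: mult_le_0_iff)

lemma edge_isotopy_surj:
  assumes "t \<in> {0..1}" "q \<in> {\<alpha>..\<alpha>+1}"
  shows "\<exists>s\<in>{\<alpha>..\<alpha>+1}. edge_isotopy h s t = q"
proof -
  have "((K+2)*1)-lipschitz_on {\<alpha>..\<alpha>+1} (\<lambda>s. edge_isotopy h s t)"
    using edge_isotopy_upper[of _ _ t t] assms edge_map_constants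
    by (intro lipschitz_onI) (auto simp: dist_real_def)
  then have "continuous_on {\<alpha>..\<alpha>+1} (\<lambda>s. edge_isotopy h s t)"
    by (rule lipschitz_on_continuous_on)
  then show ?thesis
    using IVT'[of "\<lambda>s. edge_isotopy h s t" \<alpha> q "\<alpha>+1"] assms edge_isotopy_endpoints by auto
qed

theorem edge_isotopy_bilipschitz:
  "bilipschitz_onto (max (K+4) (3/\<delta>)) ({\<alpha>..\<alpha>+1} \<times> {0..1}) (\<lambda>(s,t). (edge_isotopy h s t, t))"
proof (rule bilipschitz_ontoI)
  show "(\<lambda>(s,t). (edge_isotopy h s t, t)) ` ({\<alpha>..\<alpha>+1} \<times> {0..1}) = {\<alpha>..\<alpha>+1} \<times> {0..1}"
    using edge_isotopy_maps_edge edge_isotopy_surj by fastforce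
  show "0 \<le> max (K+4) (3/\<delta>)" using edge_map_constants by simp
next
  fix p q :: "real \<times> real" assume "p \<in> {\<alpha>..\<alpha>+1} \<times> {0..1}" "q \<in> {\<alpha>..\<alpha>+1} \<times> {0..1}"
  then obtain s t s' t' where st: "p = (s,t)" "q = (s',t')" "s \<in> {\<alpha>..\<alpha>+1}" "s' \<in> {\<alpha>..\<alpha>+1}"
    "t \<in> {0..1}" "t' \<in> {0..1}" by auto
  define d where "d = dist (edge_isotopy h s t, t) (edge_isotopy h s' t', t')"
  define D where "D = dist (s,t) (s',t')"
  have d: "\<bar>edge_isotopy h s t - edge_isotopy h s' t'\<bar> \<le> d" "\<bar>t - t'\<bar> \<le> d"
    "d \<le> \<bar>edge_isotopy h s t - edge_isotopy h s' t'\<bar> + \<bar>t - t'\<bar>"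
    unfolding d_def by (rule dist_Pair_real_bounds)+
  have D: "\<bar>s - s'\<bar> \<le> D" "\<bar>t - t'\<bar> \<le> D" "D \<le> \<bar>s - s'\<bar> + \<bar>t - t'\<bar>"
    unfolding D_def by (rule dist_Pair_real_bounds)+
  have c: "0 < \<delta>" "\<delta> \<le> 1" "1 \<le> K" using edge_map_constants by auto
  have "(K+2)*\<bar>s-s'\<bar> \<le> (K+2)*D" using D c by (intro mult_left_mono) auto
  then have "d \<le> (K+4)*D" using d D edge_isotopy_upper[OF st(3-6)] by (simp add: algebra_simps)
  also have "\<dots> \<le> max (K+4) (3/\<delta>) * D" unfolding D_def by (rule mult_right_mono) auto
  finally show "dist ((\<lambda>(s,t). (edge_isotopy h s t, t)) p) ((\<lambda>(s,t). (edge_isotopy h s t, t)) q)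
      \<le> max (K+4) (3/\<delta>) * dist p q" by (simp add: st d_def D_def)
  \<comment> \<open>\<delta>|s-s'| \<le> d + |t-t'| \<le> 2d, and |t-t'| \<le> d \<le> d/\<delta>\<close>
  have "\<delta>*\<bar>s-s'\<bar> \<le> 2*d" using edge_isotopy_lower[OF st(3-6)] d by linarith
  then have "\<bar>s-s'\<bar> \<le> 2*(d/\<delta>)" using c by (simp add: field_simps)
  moreover have "d \<le> d/\<delta>" using c by (simp add: d_def field_simps mult_left_le_one_le)
  ultimately have "D \<le> 3*(d/\<delta>)" using D d by linarith
  also have "\<dots> = (3/\<delta>) * d" by simp
  also have "\<dots> \<le> max (K+4) (3/\<delta>) * d" unfolding d_def by (rule mult_right_mono) auto
  finally show "dist p q
      \<le> max (K+4) (3/\<delta>) * dist ((\<lambda>(s,t). (edge_isotopy h s t, t)) p) ((\<lambda>(s,t). (edge_isotopy h s t, t)) q)"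
    by (simp add: st d_def D_def)
qed

end

section \<open>Cones over the boundary of a cube\<close>

type_synonym point3 = "(real \<times> real) \<times> real"

text \<open>The cube [a,a+1] \<times> [b,b+1] \<times> [0,1] is the closed unit ball of this gauge around its centre.\<close>
definition cube_gauge :: "point3 \<Rightarrow> real" where
  "cube_gauge v = 2 * max \<bar>fst (fst v)\<bar> (max \<bar>snd (fst v)\<bar> \<bar>snd v\<bar>)"

lemma cube_gauge_nonneg: "0 \<le> cube_gauge v"
  by (simp add: cube_gauge_def)

lemma cube_gauge_eq_0_iff: "cube_gauge v = 0 \<longleftrightarrow> v = 0"
  by (cases v) (auto simp: cube_gauge_def max_def zero_prod_def split: if_splits)

lemma cube_gauge_scaleR: "cube_gauge (s *\<^sub>R v) = \<bar>s\<bar> * cube_gauge v"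
proof -
  obtain x y t where v: "v = ((x,y),t)" by (metis prod.collapse)
  have "cube_gauge (s *\<^sub>R v) = 2 * max (\<bar>s\<bar>*\<bar>x\<bar>) (max (\<bar>s\<bar>*\<bar>y\<bar>) (\<bar>s\<bar>*\<bar>t\<bar>))"
    by (simp add: cube_gauge_def v abs_mult)
  also have "\<dots> = \<bar>s\<bar> * cube_gauge v"
    by (simp add: cube_gauge_def v max_mult_distrib_left mult.left_commute)
  finally show ?thesis .
qed

lemma abs_components_le_norm:
  fixes v :: point3
  shows "\<bar>fst (fst v)\<bar> \<le> norm v" "\<bar>snd (fst v)\<bar> \<le> norm v" "\<bar>snd v\<bar> \<le> norm v"
proof -
  obtain x y t where v: "v = ((x,y),t)" by (metis prod.collapse)
  have n: "norm v = sqrt ((sqrt (x\<^sup>2 + y\<^sup>2))\<^sup>2 + t\<^sup>2)" by (simp add: v norm_Pair)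
  have "\<bar>x\<bar> \<le> sqrt (x\<^sup>2 + y\<^sup>2)" "\<bar>y\<bar> \<le> sqrt (x\<^sup>2 + y\<^sup>2)"
    by (simp_all add: real_sqrt_sum_squares_ge1 real_sqrt_sum_squares_ge2 flip: real_sqrt_abs)
  moreover have "sqrt (x\<^sup>2 + y\<^sup>2) \<le> norm v" "\<bar>t\<bar> \<le> norm v"
    unfolding n by (simp_all add: real_sqrt_sum_squares_ge1 real_sqrt_sum_squares_ge2 flip: real_sqrt_abs)
  ultimately show "\<bar>fst (fst v)\<bar> \<le> norm v" "\<bar>snd (fst v)\<bar> \<le> norm v" "\<bar>snd v\<bar> \<le> norm v"
    unfolding v fst_conv snd_conv by linarith+
qed

lemma norm_le_cube_gauge: "norm v \<le> 3/2 * cube_gauge v"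
proof -
  obtain x y t where v: "v = ((x,y),t)" by (metis prod.collapse)
  have "norm v \<le> norm (x,y) + \<bar>t\<bar>" unfolding v using norm_Pair_le[of "(x,y)" t] by simp
  moreover have "norm (x,y) \<le> \<bar>x\<bar> + \<bar>y\<bar>" using norm_Pair_le[of x y] by simp
  ultimately show ?thesis by (simp add: v cube_gauge_def)
qed

lemma cube_gauge_diff_le: "\<bar>cube_gauge v - cube_gauge w\<bar> \<le> 6 * norm (v - w)"
proof -
  have max: "\<bar>max A B - max A' B'\<bar> \<le> \<bar>A - A'\<bar> + \<bar>B - B'\<bar>" for A B A' B' :: real
    by (cases "A \<le> B"; cases "A' \<le> B'") (simp_all add: max_def; linarith)+
  obtain x y t where v: "v = ((x,y),t)" by (metis prod.collapse)
  obtain x' y' t' where w: "w = ((x',y'),t')" by (metis prod.collapse)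
  define M M' where "M = max \<bar>x\<bar> (max \<bar>y\<bar> \<bar>t\<bar>)" and "M' = max \<bar>x'\<bar> (max \<bar>y'\<bar> \<bar>t'\<bar>)"
  have "\<bar>M - M'\<bar> \<le> \<bar>x - x'\<bar> + \<bar>y - y'\<bar> + \<bar>t - t'\<bar>"
    unfolding M_def M'_def
    using max[of "\<bar>x\<bar>" "max \<bar>y\<bar> \<bar>t\<bar>" "\<bar>x'\<bar>" "max \<bar>y'\<bar> \<bar>t'\<bar>"] max[of "\<bar>y\<bar>" "\<bar>t\<bar>" "\<bar>y'\<bar>" "\<bar>t'\<bar>"]
      abs_triangle_ineq3[of x x'] abs_triangle_ineq3[of y y'] abs_triangle_ineq3[of t t'] by linarith
  moreover have "\<bar>x - x'\<bar> \<le> norm (v - w)" "\<bar>y - y'\<bar> \<le> norm (v - w)" "\<bar>t - t'\<bar> \<le> norm (v - w)"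
    using abs_components_le_norm[of "v - w"] by (simp_all add: v w)
  moreover have "cube_gauge v = 2 * M" "cube_gauge w = 2 * M'"
    by (simp_all only: cube_gauge_def v w M_def M'_def fst_conv snd_conv)
  ultimately show ?thesis by linarith
qed

lemma continuous_on_cube_gauge: "continuous_on S cube_gauge"
proof -
  have "6-lipschitz_on UNIV cube_gauge"
    by (rule lipschitz_onI) (auto simp: dist_norm cube_gauge_diff_le)
  then show ?thesis by (meson lipschitz_on_continuous_on continuous_on_subset subset_UNIV)
qed

definition radial_projection :: "point3 \<Rightarrow> point3 \<Rightarrow> point3" where
  "radial_projection c z = c + (1 / cube_gauge (z - c)) *\<^sub>R (z - c)"

text \<open>The cone over f with apex c. At z = c the junk value 1/0 = 0 is harmless: the outer
  factor vanishes and the result is c.\<close>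
definition radial_extension :: "point3 \<Rightarrow> (point3 \<Rightarrow> point3) \<Rightarrow> point3 \<Rightarrow> point3" where
  "radial_extension c f z = c + cube_gauge (z - c) *\<^sub>R (f (radial_projection c z) - c)"

lemma radial_extension_apex [simp]: "radial_extension c f c = c"
  by (simp add: radial_extension_def cube_gauge_eq_0_iff)

lemma radial_extension_on_sphere: "cube_gauge (z - c) = 1 \<Longrightarrow> radial_extension c f z = f z"
  by (simp add: radial_extension_def radial_projection_def)

lemma cube_gauge_radial_projection:
  "0 < cube_gauge (z - c) \<Longrightarrow> cube_gauge (radial_projection c z - c) = 1"
  by (simp add: radial_projection_def cube_gauge_scaleR)

lemma radial_extension_inverse:
  assumes "\<And>p. cube_gauge (p - c) = 1 \<Longrightarrow> cube_gauge (f p - c) = 1 \<and> g (f p) = p"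
  shows "radial_extension c g (radial_extension c f z) = z"
    and "cube_gauge (radial_extension c f z - c) = cube_gauge (z - c)"
proof -
  define s where "s = cube_gauge (z - c)"
  define u where "u = radial_projection c z"
  have "radial_extension c g (radial_extension c f z) = z
      \<and> cube_gauge (radial_extension c f z - c) = s"
  proof (cases "s = 0")
    case True
    then show ?thesis by (simp add: s_def cube_gauge_eq_0_iff)
  next
    case False
    then have s: "s > 0" using cube_gauge_nonneg[of "z - c"] by (simp add: s_def)
    then have fu: "cube_gauge (f u - c) = 1" "g (f u) = u"
      using assms cube_gauge_radial_projection by (auto simp: s_def u_def)
    have F: "radial_extension c f z = c + s *\<^sub>R (f u - c)"
      by (simp add: radial_extension_def s_def u_def)
    then have N: "cube_gauge (radial_extension c f z - c) = s" using fu s by (simp add: cube_gauge_scaleR)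
    have "radial_projection c (radial_extension c f z) = f u" using F s N by (simp add: radial_projection_def)
    then have "radial_extension c g (radial_extension c f z) = c + s *\<^sub>R (u - c)"
      unfolding radial_extension_def[of c g] N using fu by simp
    also have "\<dots> = z" using s by (simp add: u_def radial_projection_def s_def)
    finally show ?thesis using N by simp
  qed
  then show "radial_extension c g (radial_extension c f z) = z"
    "cube_gauge (radial_extension c f z - c) = cube_gauge (z - c)" by (auto simp: s_def)
qed

lemma radial_projection_dist:
  assumes s: "0 < cube_gauge (z - c)" and r: "0 < cube_gauge (w - c)"
  shows "cube_gauge (z - c) * norm (radial_projection c z - radial_projection c w)
    \<le> dist z w + 3/2 * \<bar>cube_gauge (z - c) - cube_gauge (w - c)\<bar>"
proof -
  define s r where "s = cube_gauge (z - c)" and "r = cube_gauge (w - c)"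
  define u v where "u = radial_projection c z" and "v = radial_projection c w"
  have "s > 0" "r > 0" using s r by (simp_all add: s_def r_def)
  have u: "u = c + (1/s) *\<^sub>R (z - c)" and v: "v = c + (1/r) *\<^sub>R (w - c)"
    by (simp_all add: u_def v_def radial_projection_def s_def r_def)
  have "s *\<^sub>R (u - v) = (z - c) - (s / r) *\<^sub>R (w - c)"
    using \<open>s > 0\<close> by (simp add: u v scaleR_diff_right)
  also have "\<dots> = (z - w) + ((r - s) / r) *\<^sub>R (w - c)"
    using \<open>r > 0\<close> by (simp add: diff_divide_distrib scaleR_diff_left algebra_simps)
  finally have "s * norm (u - v) \<le> norm (z - w) + norm (((r - s) / r) *\<^sub>R (w - c))"
    using \<open>s > 0\<close> norm_triangle_ineq by (metis abs_of_pos norm_scaleR)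
  also have "norm (((r - s) / r) *\<^sub>R (w - c)) = \<bar>r - s\<bar> * norm (v - c)"
    using \<open>r > 0\<close> by (simp add: v)
  also have "\<dots> \<le> \<bar>r - s\<bar> * (3/2)"
    using norm_le_cube_gauge[of "v - c"] cube_gauge_radial_projection[OF r]
    by (intro mult_left_mono) (auto simp: v_def)
  finally show ?thesis by (simp add: s_def r_def u_def v_def dist_norm abs_minus_commute)
qed

context
  fixes c :: point3 and f :: "point3 \<Rightarrow> point3" and A P :: "point3 set" and K :: real
  assumes projection_in: "\<And>z. z \<in> P \<Longrightarrow> 0 < cube_gauge (z - c) \<Longrightarrow> radial_projection c z \<in> A"
    and lipschitz: "K-lipschitz_on A f"
    and maps_sphere: "\<And>p. p \<in> A \<Longrightarrow> cube_gauge (f p - c) = 1"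
begin

lemma norm_image_le: "p \<in> A \<Longrightarrow> norm (f p - c) \<le> 3/2"
  using norm_le_cube_gauge[of "f p - c"] maps_sphere by simp

lemma radial_extension_dist_apex:
  assumes z: "z \<in> P"
  shows "dist (radial_extension c f z) c \<le> 3/2 * cube_gauge (z - c)"
proof (cases "cube_gauge (z - c) = 0")
  case False
  then have s: "0 < cube_gauge (z - c)" using cube_gauge_nonneg[of "z - c"] by simp
  have "dist (radial_extension c f z) c = cube_gauge (z - c) * norm (f (radial_projection c z) - c)"
    using s by (simp add: radial_extension_def dist_norm)
  also have "\<dots> \<le> cube_gauge (z - c) * (3/2)"
    using norm_image_le[OF projection_in[OF z s]] s by (intro mult_left_mono) auto
  finally show ?thesis by simp
qed (simp add: radial_extension_def)

lemma radial_extension_dist: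
  assumes z: "z \<in> P" and w: "w \<in> P"
    and s: "0 < cube_gauge (z - c)" and r: "0 < cube_gauge (w - c)"
  shows "dist (radial_extension c f z) (radial_extension c f w)
    \<le> K * dist z w + (K + 1) * (3/2 * \<bar>cube_gauge (z - c) - cube_gauge (w - c)\<bar>)"
proof -
  define s r where "s = cube_gauge (z - c)" and "r = cube_gauge (w - c)"
  define u v where "u = radial_projection c z" and "v = radial_projection c w"
  have K: "0 \<le> K" using lipschitz_on_nonneg[OF lipschitz] .
  have uA: "u \<in> A" and vA: "v \<in> A" using projection_in z w s r by (simp_all add: u_def v_def)
  have uv: "s * norm (u - v) \<le> dist z w + \<bar>s - r\<bar> * (3/2)"
    using radial_projection_dist[OF s r] by (simp add: s_def r_def u_def v_def algebra_simps)
  have "radial_extension c f z - radial_extension c f w = s *\<^sub>R (f u - f v) + (s - r) *\<^sub>R (f v - c)"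
    by (simp add: radial_extension_def s_def r_def u_def v_def algebra_simps)
  then have "dist (radial_extension c f z) (radial_extension c f w)
      \<le> s * norm (f u - f v) + \<bar>s - r\<bar> * norm (f v - c)"
    using norm_triangle_ineq[of "s *\<^sub>R (f u - f v)" "(s - r) *\<^sub>R (f v - c)"] s
    by (simp add: dist_norm s_def)
  also have "\<dots> \<le> s * (K * norm (u - v)) + \<bar>s - r\<bar> * (3/2)"
    using lipschitz_onD[OF lipschitz uA vA] norm_image_le[OF vA] s
    by (intro add_mono mult_left_mono) (auto simp: dist_norm s_def)
  also have "\<dots> \<le> K * (dist z w + \<bar>s - r\<bar> * (3/2)) + \<bar>s - r\<bar> * (3/2)"
    using mult_left_mono[OF uv K] by (simp add: mult.left_commute)
  also have "\<dots> = K * dist z w + (K + 1) * (3/2 * \<bar>s - r\<bar>)"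
    by (simp add: algebra_simps)
  finally show ?thesis by (simp add: s_def r_def)
qed

theorem radial_extension_lipschitz: "(10 * K + 9)-lipschitz_on P (radial_extension c f)"
proof (rule lipschitz_onI)
  have K: "0 \<le> K" using lipschitz_on_nonneg[OF lipschitz] .
  then show "0 \<le> 10 * K + 9" by simp
  fix z w assume z: "z \<in> P" and w: "w \<in> P"
  have gauge: "\<bar>cube_gauge (z - c) - cube_gauge (w - c)\<bar> \<le> 6 * dist z w"
    using cube_gauge_diff_le[of "z - c" "w - c"] by (simp add: dist_norm)
  have d: "9 * dist z w \<le> (10 * K + 9) * dist z w"
    using K by (simp add: mult_right_mono)
  have g0: "cube_gauge 0 = 0" by (simp add: cube_gauge_eq_0_iff)
  consider "z = c" | "w = c" | "0 < cube_gauge (z - c)" "0 < cube_gauge (w - c)"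
    using cube_gauge_nonneg cube_gauge_eq_0_iff by (metis order_less_le right_minus_eq)
  then show "dist (radial_extension c f z) (radial_extension c f w) \<le> (10 * K + 9) * dist z w"
  proof cases
    case 1
    then show ?thesis using radial_extension_dist_apex[OF w] gauge d g0 cube_gauge_nonneg[of "w - c"]
      by (simp add: dist_commute)
  next
    case 2
    then show ?thesis using radial_extension_dist_apex[OF z] gauge d g0 cube_gauge_nonneg[of "z - c"]
      by simp
  next
    case 3
    have "(K + 1) * (3/2 * \<bar>cube_gauge (z - c) - cube_gauge (w - c)\<bar>) \<le> (K + 1) * (9 * dist z w)"
      using gauge K by (intro mult_left_mono) auto
    moreover have "K * dist z w + (K + 1) * (9 * dist z w) = (10 * K + 9) * dist z w"
      by (simp add: algebra_simps)
    ultimately show ?thesis using radial_extension_dist[OF z w 3] by linarith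
  qed
qed

end

lemma lipschitz_on_line_preimage:
  fixes F :: "'a::real_normed_vector \<Rightarrow> 'b::metric_space"
  assumes "L-lipschitz_on T F"
  shows "(L * dist z w)-lipschitz_on {\<tau>. z + \<tau> *\<^sub>R (w - z) \<in> T} (\<lambda>\<tau>. F (z + \<tau> *\<^sub>R (w - z)))"
proof (rule lipschitz_onI)
  fix x y assume "x \<in> {\<tau>. z + \<tau> *\<^sub>R (w - z) \<in> T}" "y \<in> {\<tau>. z + \<tau> *\<^sub>R (w - z) \<in> T}"
  then have "dist (F (z + x *\<^sub>R (w - z))) (F (z + y *\<^sub>R (w - z)))
      \<le> L * dist (z + x *\<^sub>R (w - z)) (z + y *\<^sub>R (w - z))"
    using lipschitz_onD[OF assms] by blast
  also have "dist (z + x *\<^sub>R (w - z)) (z + y *\<^sub>R (w - z)) = dist x y * dist z w"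
    by (simp add: dist_norm dist_real_def norm_minus_commute flip: scaleR_diff_left)
  finally show "dist (F (z + x *\<^sub>R (w - z))) (F (z + y *\<^sub>R (w - z))) \<le> L * dist z w * dist x y"
    by (simp add: ac_simps)
qed (use lipschitz_on_nonneg[OF assms] in simp)

lemma lipschitz_on_convex_closed_cover:
  fixes F :: "'a::real_normed_vector \<Rightarrow> 'b::metric_space"
  assumes S: "convex S" and I: "finite I" and closed: "\<And>i. i \<in> I \<Longrightarrow> closed (P i)"
    and cover: "S \<subseteq> (\<Union>i\<in>I. P i)" and lip: "\<And>i. i \<in> I \<Longrightarrow> L-lipschitz_on (P i \<inter> S) F"
    and L: "0 \<le> L"
  shows "L-lipschitz_on S F"
proof (rule lipschitz_onI[OF _ L])
  fix z w assume z: "z \<in> S" and w: "w \<in> S"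
  define \<gamma> where "\<gamma> = (\<lambda>\<tau>::real. z + \<tau> *\<^sub>R (w - z))"
  have \<gamma>S: "\<gamma> \<tau> \<in> S" if "\<tau> \<in> {0..1}" for \<tau>
  proof -
    have "\<gamma> \<tau> = (1 - \<tau>) *\<^sub>R z + \<tau> *\<^sub>R w" by (simp add: \<gamma>_def algebra_simps)
    then show ?thesis using S z w that by (auto simp: convex_alt)
  qed
  \<comment> \<open>the segment from z to w is covered by finitely many closed pieces, on each of which F \<circ> \<gamma> is Lipschitz\<close>
  have "closed ({0..1} \<inter> \<gamma> -` P i)" if "i \<in> I" for i
    by (intro closed_Int closed_real_atLeastAtMost continuous_closed_vimage closed[OF that])
      (auto simp: \<gamma>_def intro!: continuous_intros)
  moreover have "(L * dist z w)-lipschitz_on ({0..1} \<inter> \<gamma> -` P i) (F \<circ> \<gamma>)" if "i \<in> I" for i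
  proof (rule lipschitz_on_subset)
    show "(L * dist z w)-lipschitz_on {\<tau>. \<gamma> \<tau> \<in> P i \<inter> S} (F \<circ> \<gamma>)"
      using lipschitz_on_line_preimage[OF lip[OF that], of z w] by (simp add: \<gamma>_def comp_def)
    show "{0..1} \<inter> \<gamma> -` P i \<subseteq> {\<tau>. \<gamma> \<tau> \<in> P i \<inter> S}" using \<gamma>S by auto
  qed
  moreover have "{0..1} \<subseteq> (\<Union>i\<in>I. {0..1} \<inter> \<gamma> -` P i)"
    using \<gamma>S cover by blast
  ultimately have "(L * dist z w)-lipschitz_on {0..1} (F \<circ> \<gamma>)"
    using lipschitz_on_closed_Union[of I "L * dist z w" "\<lambda>i. {0..1} \<inter> \<gamma> -` P i" "F \<circ> \<gamma>" 0 1] I L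
    by auto
  from lipschitz_onD[OF this, of 0 1] show "dist (F z) (F w) \<le> L * dist z w"
    by (simp add: \<gamma>_def)
qed

section \<open>Faces of the cube\<close>

abbreviation cube :: "real \<Rightarrow> real \<Rightarrow> point3 set" where
  "cube a b \<equiv> usq a b \<times> {0..1}"

definition cube_centre :: "real \<Rightarrow> real \<Rightarrow> point3" where
  "cube_centre a b = ((a + 1/2, b + 1/2), 1/2)"

lemma mem_cube_iff_gauge: "p \<in> cube a b \<longleftrightarrow> cube_gauge (p - cube_centre a b) \<le> 1"
proof -
  obtain x y t where p: "p = ((x,y),t)" by (metis prod.collapse)
  have max: "2 * max A (max B C) \<le> (1::real) \<longleftrightarrow> A \<le> 1/2 \<and> B \<le> 1/2 \<and> C \<le> 1/2" for A B C
    by (cases "A \<le> max B C"; cases "B \<le> C") (auto simp: max_def)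
  have "cube_gauge (p - cube_centre a b) = 2 * max \<bar>x - a - 1/2\<bar> (max \<bar>y - b - 1/2\<bar> \<bar>t - 1/2\<bar>)"
    by (simp add: cube_gauge_def cube_centre_def p algebra_simps)
  then have "cube_gauge (p - cube_centre a b) \<le> 1
      \<longleftrightarrow> \<bar>x - a - 1/2\<bar> \<le> 1/2 \<and> \<bar>y - b - 1/2\<bar> \<le> 1/2 \<and> \<bar>t - 1/2\<bar> \<le> 1/2"
    by (simp only: max)
  then show ?thesis unfolding p usq_def abs_le_iff by auto
qed

datatype facet = Bottom | Top | West | East | South | North

lemma UNIV_facet: "(UNIV :: facet set) = {Bottom, Top, West, East, South, North}"
  using facet.exhaust by auto

text \<open>Linear; after centring the cube it equals 1 exactly on the plane of the facet.\<close>
definition facet_functional :: "facet \<Rightarrow> point3 \<Rightarrow> real" where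
  "facet_functional F v = 2 * (case F of
      Bottom \<Rightarrow> - snd v | Top \<Rightarrow> snd v | West \<Rightarrow> - fst (fst v) | East \<Rightarrow> fst (fst v)
    | South \<Rightarrow> - snd (fst v) | North \<Rightarrow> snd (fst v))"

lemma facet_functional_scaleR: "facet_functional F (s *\<^sub>R v) = s * facet_functional F v"
  by (cases F) (simp_all add: facet_functional_def)

lemma facet_functional_le_gauge: "facet_functional F v \<le> cube_gauge v"
  by (cases F) (auto simp: facet_functional_def cube_gauge_def)

lemma cube_gauge_attained: "\<exists>F. cube_gauge v = facet_functional F v"
proof -
  define x y t where "x = fst (fst v)" and "y = snd (fst v)" and "t = snd v"
  have "cube_gauge v \<in> {2*\<bar>x\<bar>, 2*\<bar>y\<bar>, 2*\<bar>t\<bar>}"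
    by (simp add: cube_gauge_def x_def y_def t_def max_def)
  moreover have "2*\<bar>x\<bar> \<in> {facet_functional West v, facet_functional East v}"
    "2*\<bar>y\<bar> \<in> {facet_functional South v, facet_functional North v}"
    "2*\<bar>t\<bar> \<in> {facet_functional Bottom v, facet_functional Top v}"
    by (simp_all add: facet_functional_def x_def y_def t_def abs_if)
  ultimately show ?thesis by (metis empty_iff insert_iff)
qed

definition face :: "real \<Rightarrow> real \<Rightarrow> facet \<Rightarrow> point3 set" where
  "face a b F = {p \<in> cube a b. facet_functional F (p - cube_centre a b) = 1}"

definition cube_boundary :: "real \<Rightarrow> real \<Rightarrow> point3 set" where
  "cube_boundary a b = (\<Union>F. face a b F)"

lemma mem_face_iff:
  "p \<in> face a b F \<longleftrightarrow> cube_gauge (p - cube_centre a b) = 1 \<and> facet_functional F (p - cube_centre a b) = 1"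
  using mem_cube_iff_gauge[of p a b] facet_functional_le_gauge[of F "p - cube_centre a b"]
  unfolding face_def mem_Collect_eq by linarith

lemma cube_boundary_iff_gauge: "p \<in> cube_boundary a b \<longleftrightarrow> cube_gauge (p - cube_centre a b) = 1"
  using cube_gauge_attained[of "p - cube_centre a b"]
  by (auto simp: cube_boundary_def mem_face_iff)

lemma face_subset_boundary: "face a b F \<subseteq> cube_boundary a b"
  by (auto simp: cube_boundary_def)

definition pyramid :: "real \<Rightarrow> real \<Rightarrow> facet \<Rightarrow> point3 set" where
  "pyramid a b F = {z. cube_gauge (z - cube_centre a b) \<le> 1
     \<and> cube_gauge (z - cube_centre a b) = facet_functional F (z - cube_centre a b)}"

lemma radial_projection_pyramid:
  assumes z: "z \<in> pyramid a b F" and pos: "0 < cube_gauge (z - cube_centre a b)"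
  shows "radial_projection (cube_centre a b) z \<in> face a b F"
proof -
  define c where "c = cube_centre a b"
  have "cube_gauge (radial_projection c z - c) = 1"
    using cube_gauge_radial_projection pos by (simp add: c_def)
  moreover have "facet_functional F (radial_projection c z - c) = 1"
    using z pos by (simp add: radial_projection_def facet_functional_scaleR pyramid_def c_def)
  ultimately show ?thesis by (simp add: mem_face_iff c_def)
qed

lemma cube_subset_pyramids: "cube a b \<subseteq> (\<Union>F. pyramid a b F)"
proof
  fix p assume "p \<in> cube a b"
  moreover obtain F where "cube_gauge (p - cube_centre a b) = facet_functional F (p - cube_centre a b)"
    using cube_gauge_attained by blast
  ultimately have "p \<in> pyramid a b F" using mem_cube_iff_gauge by (simp add: pyramid_def)
  then show "p \<in> (\<Union>F. pyramid a b F)" by blast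
qed

lemma closed_pyramid: "closed (pyramid a b F)"
proof -
  have g: "continuous_on UNIV (\<lambda>z. cube_gauge (z - cube_centre a b))"
    by (rule continuous_on_compose2[OF continuous_on_cube_gauge[of UNIV]]) (auto intro!: continuous_intros)
  have l: "continuous_on UNIV (\<lambda>z. facet_functional F (z - cube_centre a b))"
    by (cases F) (auto simp: facet_functional_def intro!: continuous_intros)
  have "pyramid a b F = {z. cube_gauge (z - cube_centre a b) \<le> 1}
      \<inter> {z. cube_gauge (z - cube_centre a b) = facet_functional F (z - cube_centre a b)}"
    unfolding pyramid_def by blast
  then show ?thesis
    using closed_Collect_le[OF g continuous_on_const] closed_Collect_eq[OF g l] by (simp add: closed_Int)
qed

lemma facet_functional_centre_eq_1_iff:
  "facet_functional Bottom (p - cube_centre a b) = 1 \<longleftrightarrow> snd p = 0"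
  "facet_functional Top (p - cube_centre a b) = 1 \<longleftrightarrow> snd p = 1"
  "facet_functional West (p - cube_centre a b) = 1 \<longleftrightarrow> fst (fst p) = a"
  "facet_functional East (p - cube_centre a b) = 1 \<longleftrightarrow> fst (fst p) = a+1"
  "facet_functional South (p - cube_centre a b) = 1 \<longleftrightarrow> snd (fst p) = b"
  "facet_functional North (p - cube_centre a b) = 1 \<longleftrightarrow> snd (fst p) = b+1"
  by (auto simp: facet_functional_def cube_centre_def algebra_simps)

lemma face_Bottom: "face a b Bottom = (\<lambda>x. (x, 0)) ` usq a b"
  and face_Top: "face a b Top = (\<lambda>x. (x, 1)) ` usq a b"
  and face_West: "face a b West = (\<lambda>(s,t). ((a, s), t)) ` ({b..b+1} \<times> {0..1})"
  and face_East: "face a b East = (\<lambda>(s,t). ((a+1, s), t)) ` ({b..b+1} \<times> {0..1})"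
  and face_South: "face a b South = (\<lambda>(s,t). ((s, b), t)) ` ({a..a+1} \<times> {0..1})"
  and face_North: "face a b North = (\<lambda>(s,t). ((s, b+1), t)) ` ({a..a+1} \<times> {0..1})"
  unfolding face_def facet_functional_centre_eq_1_iff
  by (auto simp: usq_def image_iff)

lemma finite_facets: "finite (UNIV :: facet set)"
  by (simp add: UNIV_facet)

lemma convex_cube: "convex (cube a b)"
  unfolding usq_def by (intro convex_Times convex_real_interval)

lemma radial_extension_lipschitz_cube:
  assumes f: "\<And>F. bilipschitz_onto K (face a b F) f"
  shows "(10 * K + 9)-lipschitz_on (cube a b) (radial_extension (cube_centre a b) f)"
proof (rule lipschitz_on_convex_closed_cover[OF convex_cube finite_facets closed_pyramid cube_subset_pyramids])
  have K: "0 \<le> K" using f[of Bottom] lipschitz_on_nonneg by (auto simp: bilipschitz_onto_def)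
  then show "0 \<le> 10 * K + 9" by simp
  fix F
  have "(10 * K + 9)-lipschitz_on (pyramid a b F) (radial_extension (cube_centre a b) f)"
  proof (rule radial_extension_lipschitz)
    show "K-lipschitz_on (face a b F) f" using f by (simp add: bilipschitz_onto_def)
    show "cube_gauge (f p - cube_centre a b) = 1" if "p \<in> face a b F" for p
      using bilipschitz_ontoD(1)[OF f that that] by (simp add: mem_face_iff)
  qed (rule radial_projection_pyramid)
  then show "(10 * K + 9)-lipschitz_on (pyramid a b F \<inter> cube a b) (radial_extension (cube_centre a b) f)"
    by (rule lipschitz_on_subset) auto
qed

lemma inv_into_cube_boundary:
  assumes f: "\<And>F. bilipschitz_onto K (face a b F) f" and inj: "inj_on f (cube_boundary a b)"
    and p: "cube_gauge (p - cube_centre a b) = 1"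
  defines "g \<equiv> inv_into (cube_boundary a b) f"
  shows "cube_gauge (f p - cube_centre a b) = 1 \<and> g (f p) = p"
    and "cube_gauge (g p - cube_centre a b) = 1 \<and> f (g p) = p"
proof -
  have "p \<in> cube_boundary a b" using p by (simp add: cube_boundary_iff_gauge)
  then obtain F where F: "p \<in> face a b F" by (auto simp: cube_boundary_def)
  have "p \<in> f ` face a b F" using f[of F] F by (simp add: bilipschitz_onto_def)
  then have "f (g p) = p" unfolding g_def
    using face_subset_boundary by (meson f_inv_into_f image_mono subsetD)
  moreover have "g (f p) = p" unfolding g_def using inj F face_subset_boundary by (meson inv_into_f_f subsetD)
  moreover have "f p \<in> face a b F" "g p \<in> face a b F"
    using bilipschitz_ontoD(1)[OF f F F]
      bilipschitz_ontoD(1)[OF bilipschitz_onto_inv_into[OF f face_subset_boundary inj] F F]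
    by (simp_all add: g_def)
  ultimately show "cube_gauge (f p - cube_centre a b) = 1 \<and> g (f p) = p"
    "cube_gauge (g p - cube_centre a b) = 1 \<and> f (g p) = p"
    by (auto simp: mem_face_iff)
qed

lemma gauge_preserving_maps_cube:
  assumes "\<And>z. cube_gauge (R z - cube_centre a b) = cube_gauge (z - cube_centre a b)"
  shows "R ` cube a b \<subseteq> cube a b"
proof (rule image_subsetI)
  fix z assume "z \<in> cube a b"
  then show "R z \<in> cube a b" using assms[of z] unfolding mem_cube_iff_gauge by simp
qed

theorem radial_extension_bilipschitz_homeo:
  assumes f: "\<And>F. bilipschitz_onto K (face a b F) f" and inj: "inj_on f (cube_boundary a b)"
  shows "bilipschitz_homeo (cube a b) (cube a b) (radial_extension (cube_centre a b) f)"
proof -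
  define c g where "c = cube_centre a b" and "g = inv_into (cube_boundary a b) f"
  define Rf Rg where "Rf = radial_extension c f" and "Rg = radial_extension c g"
  have fg: "cube_gauge (f p - c) = 1 \<and> g (f p) = p" and gf: "cube_gauge (g p - c) = 1 \<and> f (g p) = p"
    if "cube_gauge (p - c) = 1" for p
    using inv_into_cube_boundary[OF f inj] that by (simp_all add: c_def g_def)
  have RgRf: "Rg (Rf z) = z" "cube_gauge (Rf z - c) = cube_gauge (z - c)"
    and RfRg: "Rf (Rg z) = z" "cube_gauge (Rg z - c) = cube_gauge (z - c)" for z
    unfolding Rf_def Rg_def using radial_extension_inverse[OF fg] radial_extension_inverse[OF gf] by auto
  have "bilipschitz_onto K (face a b F) g" for F
    unfolding g_def by (rule bilipschitz_onto_inv_into[OF f face_subset_boundary inj])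
  then have Lf: "(10 * K + 9)-lipschitz_on (cube a b) Rf" and Lg: "(10 * K + 9)-lipschitz_on (cube a b) Rg"
    unfolding Rf_def Rg_def c_def using radial_extension_lipschitz_cube f by blast+
  have "homeomorphism (cube a b) (cube a b) Rf Rg"
  proof (rule homeomorphismI)
    show "continuous_on (cube a b) Rf" "continuous_on (cube a b) Rg"
      using Lf Lg by (simp_all add: lipschitz_on_continuous_on)
    show "Rf ` cube a b \<subseteq> cube a b" "Rg ` cube a b \<subseteq> cube a b"
      using RgRf(2) RfRg(2) by (simp_all add: gauge_preserving_maps_cube c_def)
  qed (simp_all add: RgRf RfRg)
  then show ?thesis using Lf Lg unfolding bilipschitz_homeo_def Rf_def c_def by blast
qed

section \<open>Extending an admissible map of the square\<close>

text \<open>Off the boundary the values are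
  irrelevant.\<close>
definition cube_boundary_map :: "real \<Rightarrow> real \<Rightarrow> (real \<times> real \<Rightarrow> real \<times> real) \<Rightarrow> point3 \<Rightarrow> point3"
  where
  "cube_boundary_map a b \<phi> p = (if snd p = 0 then p
     else if snd p = 1 then (\<phi> (fst p), 1)
     else if fst (fst p) = a+1
       then ((a+1, edge_isotopy (\<lambda>y. snd (\<phi> (a+1, y))) (snd (fst p)) (snd p)), snd p)
     else if fst (fst p) = a
       then ((a, edge_isotopy (\<lambda>y. snd (\<phi> (a, y))) (snd (fst p)) (snd p)), snd p)
     else if snd (fst p) = b
       then ((edge_isotopy (\<lambda>x. fst (\<phi> (x, b))) (fst (fst p)) (snd p), b), snd p)
     else ((edge_isotopy (\<lambda>x. fst (\<phi> (x, b+1))) (fst (fst p)) (snd p), b+1), snd p))"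

lemma cube_boundary_map_Bottom: "cube_boundary_map a b \<phi> (x, 0) = (x, 0)"
  and cube_boundary_map_Top: "cube_boundary_map a b \<phi> (x, 1) = (\<phi> x, 1)"
  by (simp_all add: cube_boundary_map_def)

lemma cube_boundary_map_common_face:
  assumes "\<forall>y\<in>{0..1}. \<phi> (1, y) = \<phi>' (1, y)" and "y \<in> {0..1}"
  shows "cube_boundary_map 0 0 \<phi> ((1, y), t) = cube_boundary_map 1 0 \<phi>' ((1, y), t)"
  using assms by (simp add: cube_boundary_map_def edge_isotopy_def)

locale bilipschitz_square_homeo = square_homeo +
  fixes C1 C2 :: real
  assumes lipschitz: "C1-lipschitz_on (usq a b) \<phi>" and lipschitz_inverse: "C2-lipschitz_on (usq a b) \<psi>"
begin

lemma bilipschitz_onto_square: "bilipschitz_onto (max C1 C2) (usq a b) \<phi>"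
proof (rule bilipschitz_ontoI)
  show "\<phi> ` usq a b = usq a b" using homeo by (simp add: homeomorphism_def)
  show "0 \<le> max C1 C2" using lipschitz lipschitz_on_nonneg by force
next
  fix p q assume p: "p \<in> usq a b" and q: "q \<in> usq a b"
  have "dist (\<phi> p) (\<phi> q) \<le> C1 * dist p q" using lipschitz_onD[OF lipschitz p q] .
  moreover have "dist p q \<le> C2 * dist (\<phi> p) (\<phi> q)"
    using lipschitz_onD[OF lipschitz_inverse maps_square[OF p] maps_square[OF q]] inverse_apply p q by simp
  ultimately show "dist (\<phi> p) (\<phi> q) \<le> max C1 C2 * dist p q" "dist p q \<le> max C1 C2 * dist (\<phi> p) (\<phi> q)"
    by (meson max.cobounded1 max.cobounded2 mult_right_mono order_trans zero_le_dist)+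
qed

lemma edge_map_along:
  fixes e :: "real \<Rightarrow> real \<times> real"
  assumes isometry: "\<And>s s'. dist (e s) (e s') = \<bar>s - s'\<bar>"
    and edge: "\<And>s. s \<in> {\<alpha>..\<alpha>+1} \<Longrightarrow> e s \<in> usq a b"
    and restriction: "\<And>s. s \<in> {\<alpha>..\<alpha>+1} \<Longrightarrow> \<phi> (e s) = e (h s)"
    and "h \<alpha> = \<alpha>" "h (\<alpha>+1) = \<alpha>+1"
  shows "edge_map \<alpha> (1/C2) C1 h"
proof (rule edge_map_if_bilipschitz)
  fix s s' assume s: "s \<in> {\<alpha>..\<alpha>+1}" and s': "s' \<in> {\<alpha>..\<alpha>+1}"
  have "\<bar>h s - h s'\<bar> = dist (\<phi> (e s)) (\<phi> (e s'))"
    using restriction[OF s] restriction[OF s'] isometry[of "h s" "h s'"] by simp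
  then show "\<bar>h s - h s'\<bar> \<le> C1 * \<bar>s - s'\<bar>"
    using lipschitz_onD[OF lipschitz edge[OF s] edge[OF s']] isometry by simp
  have "\<bar>s - s'\<bar> = dist (\<psi> (\<phi> (e s))) (\<psi> (\<phi> (e s')))"
    using inverse_apply[OF edge[OF s]] inverse_apply[OF edge[OF s']] isometry[of s s'] by simp
  also have "\<dots> \<le> C2 * dist (\<phi> (e s)) (\<phi> (e s'))"
    using lipschitz_onD[OF lipschitz_inverse maps_square[OF edge[OF s]] maps_square[OF edge[OF s']]] .
  also have "dist (\<phi> (e s)) (\<phi> (e s')) = \<bar>h s - h s'\<bar>"
    using restriction[OF s] restriction[OF s'] isometry[of "h s" "h s'"] by simp
  finally show "\<bar>s - s'\<bar> \<le> C2 * \<bar>h s - h s'\<bar>" .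
qed fact+

lemma edge_maps:
  "edge_map b (1/C2) C1 (\<lambda>y. snd (\<phi> (a+1, y)))" "edge_map b (1/C2) C1 (\<lambda>y. snd (\<phi> (a, y)))"
  "edge_map a (1/C2) C1 (\<lambda>x. fst (\<phi> (x, b)))" "edge_map a (1/C2) C1 (\<lambda>x. fst (\<phi> (x, b+1)))"
proof -
  have dist_real: "dist (c::real, s) (c, s') = \<bar>s - s'\<bar>" "dist (s, c) (s', c) = \<bar>s - s'\<bar>" for c s s'
    by (simp_all add: dist_Pair_Pair dist_real_def)
  show "edge_map b (1/C2) C1 (\<lambda>y. snd (\<phi> (a+1, y)))"
    by (rule edge_map_along[where e = "\<lambda>s. (a+1, s)"])
      (auto simp: dist_real usq_def fixes_vertices right_edge prod_eq_iff)
  show "edge_map b (1/C2) C1 (\<lambda>y. snd (\<phi> (a, y)))"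
    by (rule edge_map_along[where e = "\<lambda>s. (a, s)"])
      (auto simp: dist_real usq_def fixes_vertices left_edge prod_eq_iff)
  show "edge_map a (1/C2) C1 (\<lambda>x. fst (\<phi> (x, b)))"
    by (rule edge_map_along[where e = "\<lambda>s. (s, b)"])
      (auto simp: dist_real usq_def fixes_vertices bottom_edge prod_eq_iff)
  show "edge_map a (1/C2) C1 (\<lambda>x. fst (\<phi> (x, b+1)))"
    by (rule edge_map_along[where e = "\<lambda>s. (s, b+1)"])
      (auto simp: dist_real usq_def fixes_vertices top_edge prod_eq_iff)
qed

lemma cube_boundary_map_East:
  "y \<in> {b..b+1} \<Longrightarrow> cube_boundary_map a b \<phi> ((a+1, y), t)
    = ((a+1, edge_isotopy (\<lambda>y. snd (\<phi> (a+1, y))) y t), t)"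
  using right_edge by (auto simp: cube_boundary_map_def prod_eq_iff)

lemma cube_boundary_map_West:
  "y \<in> {b..b+1} \<Longrightarrow> cube_boundary_map a b \<phi> ((a, y), t)
    = ((a, edge_isotopy (\<lambda>y. snd (\<phi> (a, y))) y t), t)"
  using left_edge by (auto simp: cube_boundary_map_def prod_eq_iff)

lemma cube_boundary_map_South:
  "x \<in> {a..a+1} \<Longrightarrow> cube_boundary_map a b \<phi> ((x, b), t)
    = ((edge_isotopy (\<lambda>x. fst (\<phi> (x, b))) x t, b), t)"
  using bottom_edge edge_isotopy_endpoints[OF edge_maps(1)] edge_isotopy_endpoints[OF edge_maps(2)]
    edge_isotopy_endpoints[OF edge_maps(3)]
  by (auto simp: cube_boundary_map_def prod_eq_iff)

lemma cube_boundary_map_North: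
  "x \<in> {a..a+1} \<Longrightarrow> cube_boundary_map a b \<phi> ((x, b+1), t)
    = ((edge_isotopy (\<lambda>x. fst (\<phi> (x, b+1))) x t, b+1), t)"
  using top_edge edge_isotopy_endpoints[OF edge_maps(1)] edge_isotopy_endpoints[OF edge_maps(2)]
    edge_isotopy_endpoints[OF edge_maps(4)]
  by (auto simp: cube_boundary_map_def prod_eq_iff)

lemma constants_nonneg: "0 \<le> C1" "0 \<le> C2"
  using lipschitz_on_nonneg[OF lipschitz] lipschitz_on_nonneg[OF lipschitz_inverse] by auto

lemma bilipschitz_onto_side:
  fixes E :: "real \<times> real \<Rightarrow> point3"
  assumes "edge_map \<alpha> (1/C2) C1 h" and "\<And>u v. dist (E u) (E v) = dist u v"
    and "\<And>s t. s \<in> {\<alpha>..\<alpha>+1} \<Longrightarrow> t \<in> {0..1} \<Longrightarrow> cube_boundary_map a b \<phi> (E (s, t)) = E (edge_isotopy h s t, t)"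
  shows "bilipschitz_onto (C1 + 3*C2 + 4) (E ` ({\<alpha>..\<alpha>+1} \<times> {0..1})) (cube_boundary_map a b \<phi>)"
proof -
  have "bilipschitz_onto (max (C1+4) (3*C2)) (E ` ({\<alpha>..\<alpha>+1} \<times> {0..1})) (cube_boundary_map a b \<phi>)"
    using bilipschitz_onto_isometric_conj[OF edge_isotopy_bilipschitz[OF assms(1)] assms(2)] assms(3)
    by auto
  then show ?thesis by (rule bilipschitz_onto_mono) (use constants_nonneg in auto)
qed

lemma bilipschitz_onto_faces:
  "bilipschitz_onto (C1 + 3*C2 + 4) (face a b F) (cube_boundary_map a b \<phi>)"
proof (cases F)
  case Bottom
  have "bilipschitz_onto 1 (usq a b) id" by (rule bilipschitz_ontoI) auto
  then have "bilipschitz_onto 1 (face a b F) (cube_boundary_map a b \<phi>)"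
    unfolding Bottom face_Bottom
    by (rule bilipschitz_onto_isometric_conj) (simp_all add: dist_Pair_Pair cube_boundary_map_Bottom)
  then show ?thesis by (rule bilipschitz_onto_mono) (use constants_nonneg in auto)
next
  case Top
  have "bilipschitz_onto (max C1 C2) (face a b F) (cube_boundary_map a b \<phi>)"
    unfolding Top face_Top
    by (rule bilipschitz_onto_isometric_conj[OF bilipschitz_onto_square])
      (simp_all add: dist_Pair_Pair cube_boundary_map_Top)
  then show ?thesis by (rule bilipschitz_onto_mono) (use constants_nonneg in auto)
next
  case West
  show ?thesis unfolding West face_West
    by (rule bilipschitz_onto_side[OF edge_maps(2)]) (auto simp: dist_Pair_Pair cube_boundary_map_West)
next
  case East
  show ?thesis unfolding East face_East
    by (rule bilipschitz_onto_side[OF edge_maps(1)]) (auto simp: dist_Pair_Pair cube_boundary_map_East)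
next
  case South
  show ?thesis unfolding South face_South
    by (rule bilipschitz_onto_side[OF edge_maps(3)]) (auto simp: dist_Pair_Pair cube_boundary_map_South)
next
  case North
  show ?thesis unfolding North face_North
    by (rule bilipschitz_onto_side[OF edge_maps(4)]) (auto simp: dist_Pair_Pair cube_boundary_map_North)
qed

lemma cube_boundary_map_reflects_faces:
  assumes p: "p \<in> face a b G" and image: "cube_boundary_map a b \<phi> p \<in> face a b F"
  shows "p \<in> face a b F"
proof -
  have plane: "facet_functional F (cube_boundary_map a b \<phi> p - cube_centre a b) = 1"
    using image by (simp add: face_def)
  have "facet_functional F (p - cube_centre a b) = 1"
  proof (cases G)
    case Bottom
    then obtain x where "p = (x, 0)" using p face_Bottom by blast
    then show ?thesis using plane by (simp add: cube_boundary_map_Bottom)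
  next
    case Top
    then obtain x where x: "x \<in> usq a b" "p = (x, 1)" using p face_Top by blast
    then show ?thesis using plane edges_reflected[OF x(1)]
      by (cases F) (simp_all add: cube_boundary_map_Top facet_functional_centre_eq_1_iff)
  next
    case West
    then obtain s t where st: "s \<in> {b..b+1}" "t \<in> {0..1}" "p = ((a, s), t)" using p unfolding West face_West by auto
    then show ?thesis using plane edge_isotopy_reaches_endpoint[OF edge_maps(2) st(1,2)]
      by (cases F) (simp_all add: cube_boundary_map_West facet_functional_centre_eq_1_iff)
  next
    case East
    then obtain s t where st: "s \<in> {b..b+1}" "t \<in> {0..1}" "p = ((a+1, s), t)" using p unfolding East face_East by auto
    then show ?thesis using plane edge_isotopy_reaches_endpoint[OF edge_maps(1) st(1,2)]
      by (cases F) (simp_all add: cube_boundary_map_East facet_functional_centre_eq_1_iff)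
  next
    case South
    then obtain s t where st: "s \<in> {a..a+1}" "t \<in> {0..1}" "p = ((s, b), t)" using p unfolding South face_South by auto
    then show ?thesis using plane edge_isotopy_reaches_endpoint[OF edge_maps(3) st(1,2)]
      by (cases F) (simp_all add: cube_boundary_map_South facet_functional_centre_eq_1_iff)
  next
    case North
    then obtain s t where st: "s \<in> {a..a+1}" "t \<in> {0..1}" "p = ((s, b+1), t)" using p unfolding North face_North by auto
    then show ?thesis using plane edge_isotopy_reaches_endpoint[OF edge_maps(4) st(1,2)]
      by (cases F) (simp_all add: cube_boundary_map_North facet_functional_centre_eq_1_iff)
  qed
  then show ?thesis using p by (simp add: face_def)
qed

lemma inj_on_cube_boundary_map: "inj_on (cube_boundary_map a b \<phi>) (cube_boundary a b)"
proof (rule inj_onI)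
  fix p q assume "p \<in> cube_boundary a b" "q \<in> cube_boundary a b"
    and eq: "cube_boundary_map a b \<phi> p = cube_boundary_map a b \<phi> q"
  then obtain F G where p: "p \<in> face a b F" and q: "q \<in> face a b G" by (auto simp: cube_boundary_def)
  have "cube_boundary_map a b \<phi> q \<in> face a b F"
    using bilipschitz_ontoD(1)[OF bilipschitz_onto_faces p p] eq by simp
  then have "q \<in> face a b F" by (rule cube_boundary_map_reflects_faces[OF q])
  then have "dist p q \<le> (C1 + 3*C2 + 4) * dist (cube_boundary_map a b \<phi> p) (cube_boundary_map a b \<phi> q)"
    by (rule bilipschitz_ontoD(3)[OF bilipschitz_onto_faces p])
  then show "p = q" using eq by simp
qed

theorem bilipschitz_homeo_radial_extension:
  "bilipschitz_homeo (cube a b) (cube a b) (radial_extension (cube_centre a b) (cube_boundary_map a b \<phi>))"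
  by (rule radial_extension_bilipschitz_homeo[OF bilipschitz_onto_faces inj_on_cube_boundary_map])

end

lemma sq_admissible_restrict:
  assumes "sq_admissible a b \<phi>"
  obtains \<psi> C1 C2 where "bilipschitz_square_homeo a b (restrict \<phi> (usq a b)) \<psi> C1 C2"
proof -
  obtain \<psi> C1 C2 where h: "homeomorphism (usq a b) (usq a b) \<phi> \<psi>"
    and l1: "C1-lipschitz_on (usq a b) \<phi>" and l2: "C2-lipschitz_on (usq a b) \<psi>"
    using assms unfolding sq_admissible_def bilipschitz_homeo_def by blast
  have "(a,b) \<in> usq a b" "(a+1,b) \<in> usq a b" "(a,b+1) \<in> usq a b" "(a+1,b+1) \<in> usq a b"
    by (auto simp: usq_def)
  then have "bilipschitz_square_homeo a b (restrict \<phi> (usq a b)) \<psi> C1 C2"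
    using assms homeomorphism_cong[OF h] l2 lipschitz_on_transform[OF l1]
    unfolding sq_admissible_def by unfold_locales simp_all
  then show ?thesis by (rule that)
qed

text \<open>Restricting \<phi> to the square first makes the extension depend only on the values of \<phi> there.\<close>
definition cube_extension :: "real \<Rightarrow> real \<Rightarrow> (real \<times> real \<Rightarrow> real \<times> real) \<Rightarrow> point3 \<Rightarrow> point3" where
  "cube_extension a b \<phi> = radial_extension (cube_centre a b) (cube_boundary_map a b (restrict \<phi> (usq a b)))"

lemma cube_extension_cong:
  "(\<And>x. x \<in> usq a b \<Longrightarrow> \<phi> x = \<psi> x) \<Longrightarrow> cube_extension a b \<phi> = cube_extension a b \<psi>"
  unfolding cube_extension_def by (metis restrict_ext)

lemma cube_extension_bilipschitz_homeo:
  assumes "sq_admissible a b \<phi>"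
  shows "bilipschitz_homeo (cube a b) (cube a b) (cube_extension a b \<phi>)"
proof -
  obtain \<psi> C1 C2 where "bilipschitz_square_homeo a b (restrict \<phi> (usq a b)) \<psi> C1 C2"
    using assms by (rule sq_admissible_restrict)
  then show ?thesis
    unfolding cube_extension_def by (rule bilipschitz_square_homeo.bilipschitz_homeo_radial_extension)
qed

lemma cube_extension_bottom:
  assumes "x \<in> usq a b"
  shows "cube_extension a b \<phi> (x, 0) = (x, 0)"
proof -
  have "(x, 0) \<in> face a b Bottom" using assms by (simp add: face_Bottom)
  then show ?thesis
    by (simp add: cube_extension_def mem_face_iff radial_extension_on_sphere cube_boundary_map_Bottom)
qed

lemma cube_extension_top:
  assumes "x \<in> usq a b"
  shows "cube_extension a b \<phi> (x, 1) = (\<phi> x, 1)"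
proof -
  have "(x, 1) \<in> face a b Top" using assms by (simp add: face_Top)
  then show ?thesis
    using assms by (simp add: cube_extension_def mem_face_iff radial_extension_on_sphere cube_boundary_map_Top)
qed

lemma cube_extension_common_face:
  assumes "\<forall>y\<in>{0..1}. \<phi> (1, y) = \<phi>' (1, y)" and "y \<in> {0..1}" "t \<in> {0..1}"
  shows "cube_extension 0 0 \<phi> ((1, y), t) = cube_extension 1 0 \<phi>' ((1, y), t)"
proof -
  have "((1, y), t) \<in> face 0 0 East" "((1, y), t) \<in> face 1 0 West"
    using assms(2,3) by (auto simp: face_East face_West)
  moreover have "\<forall>y\<in>{0..1}. restrict \<phi> (usq 0 0) (1, y) = restrict \<phi>' (usq 1 0) (1, y)"
    using assms(1) by (simp add: usq_def)
  ultimately show ?thesis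
    using radial_extension_on_sphere cube_boundary_map_common_face[OF _ assms(2)]
    by (simp add: cube_extension_def mem_face_iff)
qed

theorem lemma4p4:
  shows "\<exists>Ext :: real \<Rightarrow> real \<Rightarrow> (real \<times> real \<Rightarrow> real \<times> real)
                \<Rightarrow> ((real \<times> real) \<times> real \<Rightarrow> (real \<times> real) \<times> real).
    (\<forall>a b \<phi> \<psi>. (\<forall>x\<in>usq a b. \<phi> x = \<psi> x) \<longrightarrow>
        (\<forall>p\<in>usq a b \<times> {0..1}. Ext a b \<phi> p = Ext a b \<psi> p)) \<and>
    (\<forall>a b \<phi>. sq_admissible a b \<phi> \<longrightarrow>
        bilipschitz_homeo (usq a b \<times> {0..1}) (usq a b \<times> {0..1}) (Ext a b \<phi>) \<and>
        (\<forall>x\<in>usq a b. Ext a b \<phi> (x, 0) = (x, 0)) \<and>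
        (\<forall>x\<in>usq a b. Ext a b \<phi> (x, 1) = (\<phi> x, 1))) \<and>
    (\<forall>\<phi> \<phi>'. sq_admissible 0 0 \<phi> \<longrightarrow> sq_admissible 1 0 \<phi>' \<longrightarrow>
        (\<forall>y\<in>{0..1}. \<phi> (1, y) = \<phi>' (1, y)) \<longrightarrow>
        (\<forall>y\<in>{0..1}. \<forall>t\<in>{0..1}. Ext 0 0 \<phi> ((1, y), t) = Ext 1 0 \<phi>' ((1, y), t)))"
proof (intro exI[of _ cube_extension] conjI allI impI ballI)
  fix a b and \<phi> \<psi> :: "real \<times> real \<Rightarrow> real \<times> real" and p
  assume "\<forall>x\<in>usq a b. \<phi> x = \<psi> x"
  then show "cube_extension a b \<phi> p = cube_extension a b \<psi> p" using cube_extension_cong by metis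
next
  fix a b \<phi> x assume "sq_admissible a b \<phi>"
  then show "bilipschitz_homeo (cube a b) (cube a b) (cube_extension a b \<phi>)"
    by (rule cube_extension_bilipschitz_homeo)
  show "x \<in> usq a b \<Longrightarrow> cube_extension a b \<phi> (x, 0) = (x, 0)" by (rule cube_extension_bottom)
  show "x \<in> usq a b \<Longrightarrow> cube_extension a b \<phi> (x, 1) = (\<phi> x, 1)" by (rule cube_extension_top)
qed (rule cube_extension_common_face)

end
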